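(* Let $\mathcal C\subseteq\mathbb F_q^n$ be a linear code of dimension $k$ with parity check matrix $H$, and let $\prec$ be an admissible order on $[X]$. Run Algorithm P (described in the context) on $H$. Then the algorithm terminates, and its output $(N,\phi)$ satisfies: $N$ is a set of canonical forms for $\mathcal C$ (properties (C1)–(C4) below), and $\phi$ is defined on all of $N\times X$, takes values in $N$, and satisfies $\xi(\phi(w,x))=\xi(wx)$ for all $w\in N$, $x\in X$.
   Context: Let $p$ be a prime, $q=p^m$, and fix $\alpha\in\mathbb F_q$ a root of an irreducible polynomial of degree $m$ over $\mathbb F_p$, so each element of $\mathbb F_q$ is uniquely $a_0+a_1\alpha+\dots+a_{m-1}\alpha^{m-1}$ with $a_i\in\mathbb F_p$. A linear code $\mathcal C\subseteq\mathbb F_q^n$ of dimension $k$ has a parity check matrix $H$, an $n\times(n-k)$ matrix over $\mathbb F_q$ with $\mathcal C=\{c: cH=0\}$ (vectors are rows). Let $[X]$ be the free commutative monoid on the $nm$ variables $X=\{x_{ij}:1\le i\le n,1\le j\le m\}$ (also written $x_k$, $k=(i-1)m+j$). Let $\psi:[X]\to(\mathbb F_q^n,+)$ be the monoid morphism with $\psi(x_{ij})=\alpha^{j-1}e_i$ ($e_i$ the $i$-th unit vector), i.e. $\psi(\prod x_{ij}^{\beta_{ij}})$ has $i$-th coordinate $\sum_j\beta_{ij}\alpha^{j-1}$ computed in $\mathbb F_q$. Put $\xi(w)=\psi(w)H$ (the syndrome of $w$). For $w\in[X]$ let $\mathrm{Ind}(w)=\{i:\exists j,\ x_{ij}\mid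 w\}$. Given an admissible (monomial) order $\prec$ on $[X]$, the error-vector order is: $u<_e w$ iff $|\mathrm{Ind}(u)|<|\mathrm{Ind}(w)|$, or $|\mathrm{Ind}(u)|=|\mathrm{Ind}(w)|$ and $u\prec w$; it is a total order on $[X]$. A set of canonical forms for $\mathcal C$ is a set $N\subseteq[X]$ with (C1) $1\in N$; (C2) $|N|=q^{n-k}$; (C3) distinct elements of $N$ have distinct syndromes $\xi$; (C4) every $w\in N\setminus\{1\}$ can be written $w=w'x$ with $w'\in N$, $x\in X$. Algorithm P: keep a list $L$ of words sorted increasingly by $<_e$, a set $N$ (initially $L=(1)$, $N=\emptyset$). While $L\neq\emptyset$: remove the $<_e$-smallest word $w$ from $L$. If some $w_j\in N$ has $\xi(w_j)=\xi(w)$, then for each variable $x_k$ with $w=ux_k$ and $u\in N$ set $\phi(u,x_k):=w_j$. Otherwise add $w$ to $N$, insert all products $wx$ ($x\in X$) into $L$ (keeping it sorted), and for each $x_k$ with $w=ux_k$, $u\in N$, set $\phi(u,x_k):=w$. Output $N$ and $\phi$. *)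

theory Defs
  imports "HOL-Analysis.Cartesian_Space" "HOL-Computational_Algebra.Polynomial"
    "HOL-Library.Multiset" "HOL-Library.While_Combinator"
begin

definition prime_subfield :: "'a::field set" where
  "prime_subfield = range of_nat"

definition irreducible_over :: "'a::field set \<Rightarrow> 'a poly \<Rightarrow> bool" where
  "irreducible_over S f \<longleftrightarrow>
     (\<forall>i. coeff f i \<in> S) \<and> degree f \<ge> 1 \<and>
     (\<forall>g h. (\<forall>i. coeff g i \<in> S) \<longrightarrow> (\<forall>i. coeff h i \<in> S) \<longrightarrow> f = g * h \<longrightarrow>
        degree g = 0 \<or> degree h = 0)"

text \<open>Variable x_ij (i-th coordinate, j = 1..m) is the pair (i, j-1); a monomial
  (element of the free commutative monoid [X]) is a finite multiset of variables.\<close>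

definition vars :: "nat \<Rightarrow> ('n \<times> nat) set" where
  "vars m = UNIV \<times> {..<m}"

definition monomials :: "nat \<Rightarrow> ('n \<times> nat) multiset set" where
  "monomials m = {w. set_mset w \<subseteq> vars m}"

definition Ind :: "('n \<times> nat) multiset \<Rightarrow> 'n set" where
  "Ind w = fst ` set_mset w"

definition psi :: "nat \<Rightarrow> 'a::field \<Rightarrow> ('n::finite \<times> nat) multiset \<Rightarrow> 'a ^ 'n" where
  "psi m \<alpha> w = (\<chi> i. \<Sum>j<m. of_nat (count w (i, j)) * \<alpha> ^ j)"

definition xi :: "nat \<Rightarrow> 'a::field \<Rightarrow> 'a ^ 'r ^ 'n \<Rightarrow> ('n::finite \<times> nat) multiset \<Rightarrow> 'a ^ 'r" where
  "xi m \<alpha> H w = psi m \<alpha> w v* H"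

definition admissible_order ::
  "nat \<Rightarrow> (('n \<times> nat) multiset \<Rightarrow> ('n \<times> nat) multiset \<Rightarrow> bool) \<Rightarrow> bool" where
  "admissible_order m ord \<longleftrightarrow>
     (\<forall>u\<in>monomials m. \<not> ord u u) \<and>
     (\<forall>u\<in>monomials m. \<forall>v\<in>monomials m. \<forall>w\<in>monomials m. ord u v \<longrightarrow> ord v w \<longrightarrow> ord u w) \<and>
     (\<forall>u\<in>monomials m. \<forall>w\<in>monomials m. u \<noteq> w \<longrightarrow> ord u w \<or> ord w u) \<and>
     (\<forall>u\<in>monomials m. u \<noteq> {#} \<longrightarrow> ord {#} u) \<and>
     (\<forall>u\<in>monomials m. \<forall>w\<in>monomials m. \<forall>v\<in>monomials m. ord u w \<longrightarrow> ord (u + v) (w + v))"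

definition err_less ::
  "(('n \<times> nat) multiset \<Rightarrow> ('n \<times> nat) multiset \<Rightarrow> bool) \<Rightarrow>
   ('n \<times> nat) multiset \<Rightarrow> ('n \<times> nat) multiset \<Rightarrow> bool" where
  "err_less ord u w \<longleftrightarrow>
     card (Ind u) < card (Ind w) \<or> (card (Ind u) = card (Ind w) \<and> ord u w)"

definition canonical_forms ::
  "nat \<Rightarrow> 'a::{finite,field} \<Rightarrow> 'a ^ 'r ^ 'n \<Rightarrow> ('n::finite \<times> nat) multiset set \<Rightarrow> bool" where
  "canonical_forms m \<alpha> H N \<longleftrightarrow>
     N \<subseteq> monomials m \<and>
     {#} \<in> N \<and>
     card N = CARD('a) ^ CARD('r) \<and>
     inj_on (xi m \<alpha> H) N \<and>
     (\<forall>w\<in>N. w \<noteq> {#} \<longrightarrow> (\<exists>w'\<in>N. \<exists>x\<in>vars m. w = add_mset x w'))"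

fun ins_sorted :: "('b \<Rightarrow> 'b \<Rightarrow> bool) \<Rightarrow> 'b \<Rightarrow> 'b list \<Rightarrow> 'b list" where
  "ins_sorted lt x [] = [x]"
| "ins_sorted lt x (y # ys) =
     (if x = y \<or> lt x y then x # y # ys else y # ins_sorted lt x ys)"

type_synonym ('n, 'a) algP_state =
  "('n \<times> nat) multiset list \<times> ('n \<times> nat) multiset set \<times>
   (('n \<times> nat) multiset \<times> ('n \<times> nat) \<Rightarrow> ('n \<times> nat) multiset option)"

definition phi_upd ::
  "(('n \<times> nat) multiset \<times> ('n \<times> nat) \<Rightarrow> ('n \<times> nat) multiset option) \<Rightarrow>
   ('n \<times> nat) multiset set \<Rightarrow> ('n \<times> nat) multiset \<Rightarrow> ('n \<times> nat) multiset \<Rightarrow>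
   (('n \<times> nat) multiset \<times> ('n \<times> nat) \<Rightarrow> ('n \<times> nat) multiset option)" where
  "phi_upd \<phi> N w t =
     (\<lambda>(u, x). if x \<in># w \<and> u = w - {#x#} \<and> u \<in> N then Some t else \<phi> (u, x))"

text \<open>A fixed enumeration of the variables (the result does not depend on it).\<close>
definition var_list :: "nat \<Rightarrow> ('n::finite \<times> nat) list" where
  "var_list m = (SOME xs. distinct xs \<and> set xs = vars m)"

definition algP_step ::
  "nat \<Rightarrow> 'a::field \<Rightarrow> 'a ^ 'r ^ 'n \<Rightarrow>
   (('n::finite \<times> nat) multiset \<Rightarrow> ('n \<times> nat) multiset \<Rightarrow> bool) \<Rightarrow>
   ('n, 'a) algP_state \<Rightarrow> ('n, 'a) algP_state" where
  "algP_step m \<alpha> H ord s =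
     (case s of (L, N, \<phi>) \<Rightarrow>
       (case L of [] \<Rightarrow> s
        | w # L' \<Rightarrow>
          if \<exists>v\<in>N. xi m \<alpha> H v = xi m \<alpha> H w
          then (L', N, phi_upd \<phi> N w (SOME v. v \<in> N \<and> xi m \<alpha> H v = xi m \<alpha> H w))
          else (fold (\<lambda>x. ins_sorted (err_less ord) (add_mset x w)) (var_list m) L',
                insert w N, phi_upd \<phi> N w w)))"

definition algP_init :: "('n, 'a) algP_state" where
  "algP_init = ([{#}], {}, (\<lambda>_. None))"

definition algP ::
  "nat \<Rightarrow> 'a::field \<Rightarrow> 'a ^ 'r ^ 'n \<Rightarrow>
   (('n::finite \<times> nat) multiset \<Rightarrow> ('n \<times> nat) multiset \<Rightarrow> bool) \<Rightarrow>
   ('n, 'a) algP_state option" where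
  "algP m \<alpha> H ord =
     while_option (\<lambda>(L, N, \<phi>). L \<noteq> []) (algP_step m \<alpha> H ord) algP_init"

end

theory Submission
  imports Defs "HOL-Number_Theory.Residues"
begin

(* Algorithm P is a search through the monomials in which a monomial becomes a canonical form
   exactly when its syndrome is new. An invariant of the loop states that N is closed under
   taking predecessors (C4), that its elements have distinct syndromes (C3), and that phi is
   correct wherever it is defined and is defined at (w, x) unless wx is still pending.
   The loop terminates because each new canonical form uses up one of the finitely many unseen
   syndromes and every other step shortens the list. At the end the syndromes of N contain 0
   and are closed under adding the syndrome of a variable, so they contain the syndrome of every
   monomial. Every syndrome is the syndrome of a monomial: 1, alpha, ..., alpha^(m-1) span F_q over F_p because the
   minimal polynomial of alpha has degree m and q = p^m, and c |-> cH is onto by rank-nullity.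
   This gives |N| = q^(n-k) (C2). The admissible order only decides which canonical forms are
   found. *)

(* Residues loads HOL-Algebra, whose univariate polynomials would shadow these names. *)
hide_const (open) UnivPoly.coeff UnivPoly.monom

lemma CHAR_eq_prime_of_card:
  fixes p :: nat
  assumes "prime p" and "CARD('a::{finite,field}) = p ^ m"
  shows "CHAR('a) = p"
proof -
  have CHAR_prime: "prime CHAR('a)"
    by (rule prime_CHAR_semidom) (simp add: finite_imp_CHAR_pos)
  have "m \<noteq> 0"
  proof
    assume "m = 0"
    then have "card {0, 1 :: 'a} \<le> 1" using assms(2) by (metis card_mono finite subset_UNIV power_0)
    then show False by simp
  qed
  moreover have "CHAR('a) dvd p ^ m"
    using CHAR_dvd_CARD assms(2) by metis
  ultimately show ?thesis
    using CHAR_prime assms(1) by (metis prime_dvd_power primes_dvd_imp_eq)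
qed

lemma prime_subfield_of_nat [simp]: "of_nat n \<in> prime_subfield"
  by (simp add: prime_subfield_def)

lemma prime_subfield_0 [simp]: "0 \<in> prime_subfield"
  and prime_subfield_1 [simp]: "1 \<in> prime_subfield"
  using prime_subfield_of_nat[of 0] prime_subfield_of_nat[of 1] by simp_all

lemma prime_subfield_add: "a \<in> prime_subfield \<Longrightarrow> b \<in> prime_subfield \<Longrightarrow> a + b \<in> prime_subfield"
  by (auto simp: prime_subfield_def of_nat_add[symmetric] simp del: of_nat_add)

lemma prime_subfield_mult: "a \<in> prime_subfield \<Longrightarrow> b \<in> prime_subfield \<Longrightarrow> a * b \<in> prime_subfield"
  by (auto simp: prime_subfield_def of_nat_mult[symmetric] simp del: of_nat_mult)

lemma prime_subfield_uminus:
  fixes a :: "'a::{finite,field}"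
  assumes "a \<in> prime_subfield"
  shows "- a \<in> prime_subfield"
proof -
  obtain n where a: "a = of_nat n" using assms by (auto simp: prime_subfield_def)
  have "(CHAR('a) - 1) * n + n = CHAR('a) * n"
    using finite_imp_CHAR_pos[where ?'a = 'a] by (simp add: algebra_simps)
  then have "a + of_nat ((CHAR('a) - 1) * n) = 0"
    unfolding a by (metis add.commute of_nat_add of_nat_mult of_nat_CHAR mult_zero_left)
  then have "- a = of_nat ((CHAR('a) - 1) * n)"
    by (rule iffD2[OF neg_eq_iff_add_eq_0])
  then show ?thesis by (simp only: prime_subfield_of_nat)
qed

lemma prime_subfield_diff:
  fixes a b :: "'a::{finite,field}"
  shows "a \<in> prime_subfield \<Longrightarrow> b \<in> prime_subfield \<Longrightarrow> a - b \<in> prime_subfield"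
  using prime_subfield_add prime_subfield_uminus by (metis diff_conv_add_uminus)

lemma prime_subfield_inverse:
  fixes a :: "'a::{finite,field}"
  assumes "a \<in> prime_subfield"
  shows "inverse a \<in> prime_subfield"
proof (cases "a = 0")
  case False
  have "inj_on ((*) a) prime_subfield" using False by (auto intro: inj_onI)
  moreover have "(*) a ` prime_subfield \<subseteq> prime_subfield"
    using assms prime_subfield_mult by blast
  ultimately have "(*) a ` prime_subfield = prime_subfield"
    by (simp add: endo_inj_surj)
  then obtain b where "b \<in> prime_subfield" "a * b = 1"
    using prime_subfield_1 by (metis imageE)
  then show ?thesis by (metis inverse_unique)
qed simp

lemma prime_subfield_divide:
  fixes a b :: "'a::{finite,field}"
  shows "a \<in> prime_subfield \<Longrightarrow> b \<in> prime_subfield \<Longrightarrow> a / b \<in> prime_subfield"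
  by (simp add: divide_inverse prime_subfield_mult prime_subfield_inverse)

lemma poly_cancel_lead_coeff_prime_subfield:
  fixes f g :: "'a::{finite,field} poly"
  assumes f: "\<forall>i. coeff f i \<in> prime_subfield" and g: "\<forall>i. coeff g i \<in> prime_subfield"
    and "g \<noteq> 0" and deg: "degree g \<le> degree f"
  defines "c \<equiv> lead_coeff f / lead_coeff g" and "d \<equiv> degree f - degree g"
  shows "c \<in> prime_subfield"
    and "\<forall>i. coeff (f - monom c d * g) i \<in> prime_subfield"
    and "f - monom c d * g = 0 \<or> degree (f - monom c d * g) < degree f"
proof -
  show c: "c \<in> prime_subfield"
    unfolding c_def using f g by (simp add: prime_subfield_divide)
  show "\<forall>i. coeff (f - monom c d * g) i \<in> prime_subfield"
    using f g c by (auto simp: coeff_monom_mult intro!: prime_subfield_diff prime_subfield_mult)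
  have "degree (monom c d * g) \<le> degree f"
    using degree_mult_le[of "monom c d" g] degree_monom_le[of c d] deg
    unfolding d_def by linarith
  then have "degree (f - monom c d * g) \<le> degree f" by (simp add: degree_diff_le)
  moreover have "coeff (f - monom c d * g) (degree f) = 0"
    using deg \<open>g \<noteq> 0\<close> by (simp add: coeff_monom_mult c_def d_def)
  ultimately show "f - monom c d * g = 0 \<or> degree (f - monom c d * g) < degree f"
    by (metis le_neq_implies_less leading_coeff_0_iff)
qed

lemma poly_divmod_prime_subfield:
  fixes f g :: "'a::{finite,field} poly"
  assumes "\<forall>i. coeff f i \<in> prime_subfield" and "\<forall>i. coeff g i \<in> prime_subfield" and "g \<noteq> 0"
  shows "\<exists>q r. (\<forall>i. coeff q i \<in> prime_subfield) \<and> (\<forall>i. coeff r i \<in> prime_subfield) \<and>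
           f = g * q + r \<and> (r = 0 \<or> degree r < degree g)"
  using assms(1)
proof (induction "degree f" arbitrary: f rule: less_induct)
  case less
  show ?case
  proof (cases "f = 0 \<or> degree f < degree g")
    case True
    then show ?thesis using less.prems by (intro exI[of _ 0] exI[of _ f]) auto
  next
    case False
    then have "degree g \<le> degree f" by simp
    define c where "c = lead_coeff f / lead_coeff g"
    define d where "d = degree f - degree g"
    note cancel = poly_cancel_lead_coeff_prime_subfield[OF less.prems assms(2,3) \<open>degree g \<le> degree f\<close>,
        folded c_def d_def]
    have "\<exists>q r. (\<forall>i. coeff q i \<in> prime_subfield) \<and> (\<forall>i. coeff r i \<in> prime_subfield) \<and>
        f - monom c d * g = g * q + r \<and> (r = 0 \<or> degree r < degree g)"
      using cancel False less.hyps by (cases "f - monom c d * g = 0") (auto intro!: exI[of _ 0])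
    then obtain q r where qr: "\<forall>i. coeff q i \<in> prime_subfield" "\<forall>i. coeff r i \<in> prime_subfield"
        "f - monom c d * g = g * q + r" "r = 0 \<or> degree r < degree g"
      by blast
    have "f = g * (q + monom c d) + r"
      using qr(3) by (simp add: algebra_simps eq_diff_eq)
    moreover have "\<forall>i. coeff (q + monom c d) i \<in> prime_subfield"
      using qr(1) cancel(1) by (auto simp: coeff_monom intro: prime_subfield_add)
    ultimately show ?thesis using qr(2,4) by blast
  qed
qed

lemma irreducible_over_root_degree_le:
  fixes \<alpha> :: "'a::{finite,field}"
  assumes f: "irreducible_over prime_subfield f" "poly f \<alpha> = 0"
    and h: "h \<noteq> 0" "\<forall>i. coeff h i \<in> prime_subfield" "poly h \<alpha> = 0"
  shows "degree f \<le> degree h"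
proof -
  define P where "P g \<longleftrightarrow> g \<noteq> 0 \<and> (\<forall>i. coeff g i \<in> prime_subfield) \<and> poly g \<alpha> = 0" for g
  have "P h" using h by (simp add: P_def)
  then obtain g where "P g" and g_min: "\<And>g'. P g' \<Longrightarrow> degree g \<le> degree g'"
    using ex_has_least_nat[of P h degree] by blast
  then have g: "g \<noteq> 0" "\<forall>i. coeff g i \<in> prime_subfield" "poly g \<alpha> = 0"
    by (simp_all add: P_def)
  have f_coeffs: "\<forall>i. coeff f i \<in> prime_subfield" and "f \<noteq> 0"
    using f(1) by (auto simp: irreducible_over_def)
  obtain q r where qr: "\<forall>i. coeff q i \<in> prime_subfield" "\<forall>i. coeff r i \<in> prime_subfield"
      "f = g * q + r" "r = 0 \<or> degree r < degree g"
    using poly_divmod_prime_subfield[OF f_coeffs g(2,1)] by blast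
  have "poly r \<alpha> = 0"
    using f(2) g(3) qr(3) by simp
  then have "r = 0"
    using qr(2,4) g_min[of r] unfolding P_def by (meson not_le)
  then have fgq: "f = g * q" using qr(3) by simp
  have "degree g \<noteq> 0"
  proof
    assume "degree g = 0"
    then obtain c where "g = [:c:]" by (metis degree_0_id)
    then show False using g(1,3) by simp
  qed
  then have "degree q = 0"
    using f(1) fgq g(2) qr(1) by (auto simp: irreducible_over_def)
  moreover have "q \<noteq> 0" using fgq \<open>f \<noteq> 0\<close> by auto
  ultimately have "degree f = degree g"
    using fgq g(1) by (simp add: degree_mult_eq)
  then show ?thesis using g_min \<open>P h\<close> by simp
qed

lemma field_elem_as_poly_in_root:
  fixes \<alpha> :: "'a::{finite,field}"
  assumes "prime p" and "CARD('a) = p ^ m"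
    and f: "irreducible_over prime_subfield f" "degree f = m" "poly f \<alpha> = 0"
  shows "\<exists>c. a = (\<Sum>j<m. of_nat (c j) * \<alpha> ^ j)"
proof -
  define E where "E c = (\<Sum>j<m. of_nat (c j) * \<alpha> ^ j :: 'a)" for c
  define A where "A = PiE {..<m} (\<lambda>_. {..<p})"
  have "inj_on E A"
  proof (rule inj_onI)
    fix c c' assume c: "c \<in> A" "c' \<in> A" and "E c = E c'"
    define h where "h = (\<Sum>j<m. monom (of_nat (c j) - of_nat (c' j) :: 'a) j)"
    have coeff_h: "coeff h i = (if i < m then of_nat (c i) - of_nat (c' i) else 0)" for i
      by (simp add: h_def coeff_sum coeff_monom)
    have "poly h \<alpha> = E c - E c'"
      by (simp add: h_def E_def poly_sum poly_monom sum_subtractf algebra_simps)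
    then have "poly h \<alpha> = 0" using \<open>E c = E c'\<close> by simp
    moreover have "\<forall>i. coeff h i \<in> prime_subfield"
      by (simp add: coeff_h prime_subfield_diff)
    moreover have "h \<noteq> 0 \<Longrightarrow> degree h < m"
      by (rule degree_lessI) (simp_all add: coeff_h)
    ultimately have "h = 0"
      using irreducible_over_root_degree_le[OF f(1,3), of h] f(2) by (meson leD)
    then have "[c j = c' j] (mod CHAR('a))" if "j < m" for j
      using coeff_h[of j] that by (simp add: of_nat_eq_iff_cong_CHAR[symmetric])
    then have "c j = c' j" if "j < m" for j
      using that c CHAR_eq_prime_of_card[OF assms(1,2)]
      by (intro cong_less_modulus_unique_nat[of _ _ "CHAR('a)"]) (auto simp: A_def)
    then show "c = c'"
      using c by (auto simp: A_def intro: PiE_ext)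
  qed
  then have "card (E ` A) = CARD('a)"
    by (simp add: card_image A_def card_PiE assms(2))
  then have "E ` A = UNIV"
    by (intro card_subset_eq) auto
  then have "a \<in> E ` A" by simp
  then show ?thesis unfolding E_def by blast
qed

lemma psi_add: "psi m \<alpha> (u + w) = psi m \<alpha> u + psi m \<alpha> w"
  by (simp add: psi_def vec_eq_iff sum.distrib distrib_right)

lemma xi_add: "xi m \<alpha> H (u + w) = xi m \<alpha> H u + xi m \<alpha> H w"
  by (simp add: xi_def psi_add vector_matrix_left_distrib)

lemma psi_image_monomials:
  fixes \<alpha> :: "'a::field"
  assumes "\<And>a::'a. \<exists>c. a = (\<Sum>j<m. of_nat (c j) * \<alpha> ^ j)"
  shows "psi m \<alpha> ` monomials m = (UNIV :: ('a ^ 'n::finite) set)"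
proof -
  have "v \<in> psi m \<alpha> ` monomials m" for v :: "'a ^ 'n"
  proof -
    have "\<forall>i. \<exists>ci. v $ i = (\<Sum>j<m. of_nat (ci j) * \<alpha> ^ j)"
      using assms by blast
    then obtain c where c: "\<And>i. v $ i = (\<Sum>j<m. of_nat (c i j) * \<alpha> ^ j)"
      by metis
    define w where "w = (\<Sum>i\<in>UNIV. \<Sum>j<m. replicate_mset (c i j) (i, j))"
    have count_w: "count w (i, j) = (if j < m then c i j else 0)" for i j
    proof -
      have "count w (i, j) = (\<Sum>i'\<in>UNIV. if i' = i then (\<Sum>j'<m. if j' = j then c i' j' else 0) else 0)"
        unfolding w_def count_sum count_replicate_mset by (intro sum.cong refl) auto
      then show ?thesis by simp
    qed
    have "j < m" if "(i, j) \<in># w" for i j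
      using that count_w[of i j] by (auto split: if_splits simp flip: count_greater_zero_iff)
    then have "w \<in> monomials m"
      by (auto simp: monomials_def vars_def)
    moreover have "psi m \<alpha> w = v"
      by (simp add: psi_def vec_eq_iff count_w c)
    ultimately show ?thesis by blast
  qed
  then show ?thesis by blast
qed

lemma vec_span_Int_span_Diff:
  fixes C :: "('a::field ^ 'n::finite) set"
  assumes "vec.independent C" and "B \<subseteq> C"
  shows "vec.span B \<inter> vec.span (C - B) \<subseteq> {0}"
proof -
  have "finite C" using vec.finiteI_independent[OF assms(1)] .
  have B: "vec.independent B" and D: "vec.independent (C - B)"
    using vec.independent_mono[OF assms(1)] assms(2) by auto
  have "{x + y |x y. x \<in> vec.span B \<and> y \<in> vec.span (C - B)} = vec.span C"
    using assms(2) vec.span_Un[of B "C - B"] by (simp add: Un_absorb1)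
  moreover have "vec.dim {x + y |x y. x \<in> vec.span B \<and> y \<in> vec.span (C - B)} +
      vec.dim (vec.span B \<inter> vec.span (C - B)) = vec.dim (vec.span B) + vec.dim (vec.span (C - B))"
    by (rule vec.dim_sums_Int) auto
  moreover have "card B + card (C - B) = card C"
    using \<open>finite C\<close> assms(2) card_mono[OF \<open>finite C\<close> assms(2)]
    by (simp add: card_Diff_subset finite_subset)
  ultimately have "vec.dim (vec.span B \<inter> vec.span (C - B)) = 0"
    using assms(1) B D by (simp add: vec.dim_eq_card_independent)
  then show ?thesis by simp
qed

lemma vec_dim_kernel_add_dim_range:
  fixes f :: "'a::field ^ 'n::finite \<Rightarrow> 'a ^ 'm::finite"
  assumes lin: "Vector_Spaces.linear (*s) (*s) f"
  shows "vec.dim {x. f x = 0} + vec.dim (range f) = CARD('n)"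
proof -
  define K where "K = {x. f x = 0}"
  obtain B where B: "B \<subseteq> K" "vec.independent B" "K \<subseteq> vec.span B" "card B = vec.dim K"
    using vec.basis_exists by blast
  obtain C where C: "B \<subseteq> C" "C \<subseteq> UNIV" "vec.independent C" "UNIV \<subseteq> vec.span C"
    by (rule vec.maximal_independent_subset_extend[OF subset_UNIV B(2)])
  define D where "D = C - B"
  have "finite C" using vec.finiteI_independent[OF C(3)] .
  have card_C: "card C = CARD('n)"
    using vec.basis_card_eq_dim[OF subset_UNIV C(4,3)] vec_dim_card by simp
  have D: "vec.independent D"
    unfolding D_def by (rule vec.independent_mono[OF C(3)]) blast
  have card_B_D: "card B + card D = CARD('n)"
    using C(1) \<open>finite C\<close> card_C card_mono[OF \<open>finite C\<close> C(1)]
    by (simp add: D_def card_Diff_subset finite_subset)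
  have span_B_D: "{x + y |x y. x \<in> vec.span B \<and> y \<in> vec.span D} = UNIV"
    using C(1,4) vec.span_Un[of B D] by (auto simp: D_def Un_absorb1)
  have "vec.span B \<inter> vec.span D \<subseteq> {0}"
    unfolding D_def by (rule vec_span_Int_span_Diff[OF C(3,1)])
  moreover have "vec.span B \<subseteq> K"
    using B(1) vec.linear_subspace_kernel[OF lin] vec.span_minimal unfolding K_def by blast
  ultimately have inj: "inj_on f (vec.span D)"
    using B(3) by (auto simp: vec.linear_inj_on_iff_eq_0[OF lin] K_def)
  have "range f = f ` vec.span D"
  proof (rule subset_antisym)
    show "range f \<subseteq> f ` vec.span D"
    proof
      fix y assume "y \<in> range f"
      then obtain x where "y = f x" by blast
      moreover have "x \<in> {x + y |x y. x \<in> vec.span B \<and> y \<in> vec.span D}"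
        using span_B_D by simp
      then obtain b d where "x = b + d" "b \<in> vec.span B" "d \<in> vec.span D"
        by blast
      ultimately show "y \<in> f ` vec.span D"
        using \<open>vec.span B \<subseteq> K\<close> by (auto simp: K_def vec.linear_add[OF lin])
    qed
    show "f ` vec.span D \<subseteq> range f" by (rule image_mono[OF subset_UNIV])
  qed
  then have "vec.dim (range f) = card D"
    using vec.dim_image_eq[OF lin, of "vec.span D"] inj D
    by (simp add: vec.span_span vec.dim_eq_card_independent)
  then show ?thesis
    using B(4) card_B_D unfolding K_def by simp
qed

lemma surj_vector_matrix_mult:
  fixes H :: "'a::field ^ 'r::finite ^ 'n::finite"
  assumes "CARD('r) = CARD('n) - vec.dim {c. c v* H = 0}"
  shows "surj (\<lambda>c. c v* H)"
proof -
  have "(\<lambda>c. c v* H) = (*v) (transpose H)"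
    by (simp add: fun_eq_iff)
  then have lin: "Vector_Spaces.linear (*s) (*s) (\<lambda>c. c v* H)"
    by (simp add: matrix_vector_mul_linear_gen)
  then have "vec.dim (range (\<lambda>c. c v* H)) = CARD('r)"
    using vec_dim_kernel_add_dim_range[OF lin] assms by simp
  then have "vec.span (range (\<lambda>c. c v* H)) = UNIV"
    using vec.dim_eq_full[of "range (\<lambda>c. c v* H)"] by (simp add: vec.dimension_def card_cart_basis)
  then show ?thesis
    using vec.linear_subspace_image[OF lin, of UNIV] by (metis vec.span_eq_iff vec.subspace_UNIV)
qed

lemma set_ins_sorted [simp]: "set (ins_sorted lt x xs) = insert x (set xs)"
  by (induction xs) auto

lemma length_ins_sorted [simp]: "length (ins_sorted lt x xs) = Suc (length xs)"
  by (induction xs) auto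

lemma set_fold_ins_sorted:
  "set (fold (\<lambda>x. ins_sorted lt (g x)) xs L) = set L \<union> g ` set xs"
  by (induction xs arbitrary: L) auto

lemma length_fold_ins_sorted:
  "length (fold (\<lambda>x. ins_sorted lt (g x)) xs L) = length L + length xs"
  by (induction xs arbitrary: L) auto

lemma set_var_list: "set (var_list m) = (vars m :: ('n::finite \<times> nat) set)"
proof -
  have "finite (vars m :: ('n \<times> nat) set)" by (simp add: vars_def)
  then have "\<exists>xs. distinct xs \<and> set xs = (vars m :: ('n \<times> nat) set)"
    using finite_distinct_list by blast
  from someI_ex[OF this] show ?thesis
    unfolding var_list_def by (rule conjunct2)
qed

lemma phi_upd_apply:
  "phi_upd \<phi> N w t (u, x) = (if w = add_mset x u \<and> u \<in> N then Some t else \<phi> (u, x))"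
  by (auto simp: phi_upd_def)

fun algP_inv :: "nat \<Rightarrow> 'a::field \<Rightarrow> 'a ^ 'r ^ 'n \<Rightarrow> ('n::finite, 'a) algP_state \<Rightarrow> bool" where
  "algP_inv m \<alpha> H (L, N, \<phi>) \<longleftrightarrow>
     N \<union> set L \<subseteq> monomials m \<and> inj_on (xi m \<alpha> H) N \<and> ({#} \<in> N \<or> N = {} \<and> L = [{#}]) \<and>
     (\<forall>w\<in>N \<union> set L. w \<noteq> {#} \<longrightarrow> (\<exists>u\<in>N. \<exists>x\<in>vars m. w = add_mset x u)) \<and>
     (\<forall>u x v. \<phi> (u, x) = Some v \<longrightarrow> v \<in> N \<and> xi m \<alpha> H v = xi m \<alpha> H (add_mset x u)) \<and>
     (\<forall>u\<in>N. \<forall>x\<in>vars m. add_mset x u \<in> set L \<or> \<phi> (u, x) \<noteq> None)"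

lemma algP_inv_init: "algP_inv m \<alpha> H algP_init"
  by (simp add: algP_init_def monomials_def)

lemma algP_inv_step_known:
  fixes H :: "'a::field ^ 'r ^ 'n::finite"
  assumes inv: "algP_inv m \<alpha> H (w # L, N, \<phi>)" and t: "t \<in> N" "xi m \<alpha> H t = xi m \<alpha> H w"
  shows "algP_inv m \<alpha> H (L, N, phi_upd \<phi> N w t)"
  unfolding algP_inv.simps
proof (intro conjI)
  show "N \<union> set L \<subseteq> monomials m" "inj_on (xi m \<alpha> H) N"
    "\<forall>v\<in>N \<union> set L. v \<noteq> {#} \<longrightarrow> (\<exists>u\<in>N. \<exists>x\<in>vars m. v = add_mset x u)"
    using inv by auto
  show "{#} \<in> N \<or> N = {} \<and> L = [{#}]"
    using inv t by auto
  show "\<forall>u x v. phi_upd \<phi> N w t (u, x) = Some v \<longrightarrow>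
          v \<in> N \<and> xi m \<alpha> H v = xi m \<alpha> H (add_mset x u)"
    using inv t by (auto simp: phi_upd_apply)
  show "\<forall>u\<in>N. \<forall>x\<in>vars m. add_mset x u \<in> set L \<or> phi_upd \<phi> N w t (u, x) \<noteq> None"
  proof (intro ballI)
    fix u and x :: "'n \<times> nat" assume "u \<in> N" "x \<in> vars m"
    then have "add_mset x u \<in> set (w # L) \<or> \<phi> (u, x) \<noteq> None"
      using inv by simp
    then show "add_mset x u \<in> set L \<or> phi_upd \<phi> N w t (u, x) \<noteq> None"
      using \<open>u \<in> N\<close> by (auto simp: phi_upd_apply)
  qed
qed

lemma algP_inv_step_new:
  fixes H :: "'a::field ^ 'r ^ 'n::finite"
  assumes inv: "algP_inv m \<alpha> H (w # L, N, \<phi>)" and new: "xi m \<alpha> H w \<notin> xi m \<alpha> H ` N"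
    and set_L': "set L' = set L \<union> (\<lambda>x. add_mset x w) ` vars m"
  shows "algP_inv m \<alpha> H (L', insert w N, phi_upd \<phi> N w w)"
  unfolding algP_inv.simps
proof (intro conjI)
  have "w \<in> monomials m"
    using inv by simp
  then show "insert w N \<union> set L' \<subseteq> monomials m"
    using inv by (auto simp: set_L' monomials_def)
  show "inj_on (xi m \<alpha> H) (insert w N)"
    using inv new by (force simp: inj_on_insert)
  show "{#} \<in> insert w N \<or> insert w N = {} \<and> L' = [{#}]"
    using inv by auto
  show "\<forall>v\<in>insert w N \<union> set L'. v \<noteq> {#} \<longrightarrow> (\<exists>u\<in>insert w N. \<exists>x\<in>vars m. v = add_mset x u)"
  proof (intro ballI impI)
    fix v assume "v \<in> insert w N \<union> set L'" "v \<noteq> {#}"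
    then consider "v \<in> N \<union> set (w # L)" | "v \<in> (\<lambda>x. add_mset x w) ` vars m"
      using set_L' by auto
    then show "\<exists>u\<in>insert w N. \<exists>x\<in>vars m. v = add_mset x u"
    proof cases
      case 1
      have "\<forall>v\<in>N \<union> set (w # L). v \<noteq> {#} \<longrightarrow> (\<exists>u\<in>N. \<exists>x\<in>vars m. v = add_mset x u)"
        using inv by simp
      then show ?thesis using 1 \<open>v \<noteq> {#}\<close> by blast
    qed blast
  qed
  show "\<forall>u x v. phi_upd \<phi> N w w (u, x) = Some v \<longrightarrow>
          v \<in> insert w N \<and> xi m \<alpha> H v = xi m \<alpha> H (add_mset x u)"
    using inv by (auto simp: phi_upd_apply)
  show "\<forall>u\<in>insert w N. \<forall>x\<in>vars m. add_mset x u \<in> set L' \<or> phi_upd \<phi> N w w (u, x) \<noteq> None"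
  proof (intro ballI)
    fix u and x :: "'n \<times> nat" assume u: "u \<in> insert w N" and x: "x \<in> vars m"
    show "add_mset x u \<in> set L' \<or> phi_upd \<phi> N w w (u, x) \<noteq> None"
    proof (cases "u = w")
      case False
      then have "add_mset x u \<in> set (w # L) \<or> \<phi> (u, x) \<noteq> None"
        using inv u x by simp
      then show ?thesis
        using False u by (auto simp: phi_upd_apply set_L')
    qed (simp add: set_L' x)
  qed
qed

lemma algP_inv_step:
  fixes H :: "'a::field ^ 'r ^ 'n::finite"
  assumes inv: "algP_inv m \<alpha> H (w # L, N, \<phi>)"
  shows "algP_inv m \<alpha> H (algP_step m \<alpha> H ord (w # L, N, \<phi>))"
proof (cases "\<exists>v\<in>N. xi m \<alpha> H v = xi m \<alpha> H w")
  case True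
  define t where "t = (SOME v. v \<in> N \<and> xi m \<alpha> H v = xi m \<alpha> H w)"
  have "\<exists>v. v \<in> N \<and> xi m \<alpha> H v = xi m \<alpha> H w" using True by blast
  from someI_ex[OF this] have t: "t \<in> N" "xi m \<alpha> H t = xi m \<alpha> H w"
    unfolding t_def by blast+
  have "algP_step m \<alpha> H ord (w # L, N, \<phi>) = (L, N, phi_upd \<phi> N w t)"
    using True by (simp add: algP_step_def t_def)
  then show ?thesis using algP_inv_step_known[OF inv t] by simp
next
  case False
  then have "xi m \<alpha> H w \<notin> xi m \<alpha> H ` N" by auto
  moreover have "set (fold (\<lambda>x. ins_sorted (err_less ord) (add_mset x w)) (var_list m) L)
      = set L \<union> (\<lambda>x. add_mset x w) ` vars m"
    by (simp add: set_fold_ins_sorted set_var_list)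
  moreover have "algP_step m \<alpha> H ord (w # L, N, \<phi>) =
      (fold (\<lambda>x. ins_sorted (err_less ord) (add_mset x w)) (var_list m) L, insert w N, phi_upd \<phi> N w w)"
    using False by (simp add: algP_step_def)
  ultimately show ?thesis using algP_inv_step_new[OF inv] by simp
qed

fun algP_measure :: "nat \<Rightarrow> 'a::field \<Rightarrow> 'a ^ 'r ^ 'n \<Rightarrow> ('n::finite, 'a) algP_state \<Rightarrow> nat" where
  "algP_measure m \<alpha> H (L, N, \<phi>) =
     (length (var_list m :: ('n \<times> nat) list) + 1) * card (UNIV - xi m \<alpha> H ` N) + length L"

lemma algP_measure_step:
  fixes H :: "'a::{finite,field} ^ 'r::finite ^ 'n::finite"
  shows "algP_measure m \<alpha> H (algP_step m \<alpha> H ord (w # L, N, \<phi>)) < algP_measure m \<alpha> H (w # L, N, \<phi>)"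
proof (cases "\<exists>v\<in>N. xi m \<alpha> H v = xi m \<alpha> H w")
  case False
  let ?unseen = "UNIV - xi m \<alpha> H ` N"
  have unseen: "UNIV - xi m \<alpha> H ` insert w N = ?unseen - {xi m \<alpha> H w}" by auto
  have "xi m \<alpha> H w \<in> ?unseen" using False by auto
  then have card_unseen: "card ?unseen = Suc (card (UNIV - xi m \<alpha> H ` insert w N))"
    unfolding unseen by (intro card_Suc_Diff1[symmetric]) simp_all
  have "algP_step m \<alpha> H ord (w # L, N, \<phi>) =
      (fold (\<lambda>x. ins_sorted (err_less ord) (add_mset x w)) (var_list m) L, insert w N, phi_upd \<phi> N w w)"
    using False by (simp add: algP_step_def)
  then show ?thesis
    unfolding algP_measure.simps card_unseen by (simp add: length_fold_ins_sorted)
qed (simp add: algP_step_def)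

lemma algP_terminates:
  fixes H :: "'a::{finite,field} ^ 'r::finite ^ 'n::finite"
  obtains N \<phi> where "algP m \<alpha> H ord = Some ([], N, \<phi>)" and "algP_inv m \<alpha> H ([], N, \<phi>)"
proof -
  have step: "algP_inv m \<alpha> H (algP_step m \<alpha> H ord s) \<and>
      algP_measure m \<alpha> H (algP_step m \<alpha> H ord s) < algP_measure m \<alpha> H s"
    if inv: "algP_inv m \<alpha> H s" and running: "(\<lambda>(L, N, \<phi>). L \<noteq> []) s" for s
  proof -
    obtain w L N \<phi> where s: "s = (w # L, N, \<phi>)"
      using running by (cases s) (auto simp: neq_Nil_conv)
    have "algP_inv m \<alpha> H (w # L, N, \<phi>)" using inv unfolding s .
    then show ?thesis unfolding s by (intro conjI algP_inv_step algP_measure_step)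
  qed
  have "\<exists>s. algP m \<alpha> H ord = Some s"
    unfolding algP_def
    by (rule measure_while_option_Some[where P = "algP_inv m \<alpha> H" and f = "algP_measure m \<alpha> H"])
      (simp_all only: step algP_inv_init)
  then obtain s where s: "algP m \<alpha> H ord = Some s" ..
  have "algP_inv m \<alpha> H s"
    by (rule while_option_rule[where P = "algP_inv m \<alpha> H", OF _ s[unfolded algP_def] algP_inv_init])
      (simp only: step)
  moreover have "\<not> (\<lambda>(L, N, \<phi>). L \<noteq> []) s"
    using while_option_stop[OF s[unfolded algP_def]] .
  ultimately show thesis
    using that s by (cases s) auto
qed

lemma syndromes_of_monomials_subset:
  assumes "{#} \<in> N"
    and closed: "\<And>u x. u \<in> N \<Longrightarrow> x \<in> vars m \<Longrightarrow> xi m \<alpha> H (add_mset x u) \<in> xi m \<alpha> H ` N"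
  shows "xi m \<alpha> H ` monomials m \<subseteq> xi m \<alpha> H ` N"
proof -
  have "set_mset w \<subseteq> vars m \<Longrightarrow> xi m \<alpha> H w \<in> xi m \<alpha> H ` N" for w
  proof (induction w)
    case empty
    show ?case using assms(1) by (rule imageI)
  next
    case (add x w)
    then have "xi m \<alpha> H w \<in> xi m \<alpha> H ` N" and x: "x \<in> vars m" by simp_all
    then obtain u where u: "u \<in> N" "xi m \<alpha> H w = xi m \<alpha> H u" by (metis imageE)
    then have "xi m \<alpha> H (add_mset x w) = xi m \<alpha> H (add_mset x u)"
      using xi_add[of m \<alpha> H w "{#x#}"] xi_add[of m \<alpha> H u "{#x#}"] by simp
    then show ?case using closed[OF u(1) x] by simp
  qed
  then show ?thesis by (auto simp: monomials_def)
qed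

lemma algP_inv_final:
  fixes H :: "'a::{finite,field} ^ 'r::finite ^ 'n::finite"
  assumes inv: "algP_inv m \<alpha> H ([], N, \<phi>)" and surj: "xi m \<alpha> H ` monomials m = UNIV"
  shows "canonical_forms m \<alpha> H N"
    and "\<forall>w\<in>N. \<forall>x\<in>vars m. \<exists>v. \<phi> (w, x) = Some v \<and> v \<in> N \<and> xi m \<alpha> H v = xi m \<alpha> H (add_mset x w)"
proof -
  from inv have N: "N \<subseteq> monomials m" "inj_on (xi m \<alpha> H) N" "{#} \<in> N"
    and pred: "\<forall>w\<in>N. w \<noteq> {#} \<longrightarrow> (\<exists>u\<in>N. \<exists>x\<in>vars m. w = add_mset x u)"
    and sound: "\<forall>u x v. \<phi> (u, x) = Some v \<longrightarrow> v \<in> N \<and> xi m \<alpha> H v = xi m \<alpha> H (add_mset x u)"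
    and complete: "\<forall>u\<in>N. \<forall>x\<in>vars m. \<phi> (u, x) \<noteq> None"
    by simp_all
  show phi: "\<forall>w\<in>N. \<forall>x\<in>vars m. \<exists>v. \<phi> (w, x) = Some v \<and> v \<in> N \<and> xi m \<alpha> H v = xi m \<alpha> H (add_mset x w)"
  proof (intro ballI)
    fix w and x :: "'n \<times> nat" assume "w \<in> N" "x \<in> vars m"
    then have "\<phi> (w, x) \<noteq> None" using complete by blast
    then obtain v where "\<phi> (w, x) = Some v" by (cases "\<phi> (w, x)") simp_all
    then show "\<exists>v. \<phi> (w, x) = Some v \<and> v \<in> N \<and> xi m \<alpha> H v = xi m \<alpha> H (add_mset x w)"
      using sound[rule_format, of w x v] by simp
  qed
  have "xi m \<alpha> H (add_mset x u) \<in> xi m \<alpha> H ` N"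
    if u: "u \<in> N" and x: "x \<in> vars m" for u x
  proof -
    obtain v where "xi m \<alpha> H v = xi m \<alpha> H (add_mset x u)" "v \<in> N"
      using phi[rule_format, OF u x] by blast
    then show ?thesis by (rule image_eqI[OF sym])
  qed
  then have "UNIV \<subseteq> xi m \<alpha> H ` N"
    using syndromes_of_monomials_subset[OF N(3), of m \<alpha> H] unfolding surj by blast
  then have "xi m \<alpha> H ` N = UNIV"
    by (rule top_unique[THEN iffD1])
  then have "card N = CARD('a) ^ CARD('r)"
    using card_image[OF N(2)] by simp
  then show "canonical_forms m \<alpha> H N"
    using N pred by (simp add: canonical_forms_def)
qed

theorem theorem1p8:
  fixes p m k :: nat
    and \<alpha> :: "'a::{finite,field}"
    and H :: "'a ^ 'r::finite ^ 'n::finite"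
    and ord :: "('n \<times> nat) multiset \<Rightarrow> ('n \<times> nat) multiset \<Rightarrow> bool"
  assumes "prime p"
    and "CARD('a) = p ^ m"
    and "\<exists>f :: 'a poly. irreducible_over prime_subfield f \<and> degree f = m \<and> poly f \<alpha> = 0"
    and "vec.dim {c :: 'a ^ 'n. c v* H = 0} = k"
    and "CARD('r) = CARD('n) - k"
    and "admissible_order m ord"
  shows "\<exists>L N \<phi>. algP m \<alpha> H ord = Some (L, N, \<phi>) \<and>
           canonical_forms m \<alpha> H N \<and>
           (\<forall>w\<in>N. \<forall>x\<in>vars m. \<exists>v. \<phi> (w, x) = Some v \<and> v \<in> N \<and>
               xi m \<alpha> H v = xi m \<alpha> H (add_mset x w))"
proof -
  obtain f :: "'a poly" where f: "irreducible_over prime_subfield f" "degree f = m" "poly f \<alpha> = 0"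
    using assms(3) by blast
  have psi: "psi m \<alpha> ` monomials m = UNIV"
    by (rule psi_image_monomials[OF field_elem_as_poly_in_root[OF assms(1,2) f]])
  have syndrome: "surj (\<lambda>c. c v* H)"
    by (rule surj_vector_matrix_mult) (simp add: assms(4,5))
  have xi: "xi m \<alpha> H = (\<lambda>c. c v* H) \<circ> psi m \<alpha>"
    by (simp add: fun_eq_iff xi_def)
  have "xi m \<alpha> H ` monomials m = UNIV"
    unfolding xi image_comp[symmetric] psi by (rule syndrome)
  obtain N \<phi> where "algP m \<alpha> H ord = Some ([], N, \<phi>)" and "algP_inv m \<alpha> H ([], N, \<phi>)"
    by (rule algP_terminates)
  with algP_inv_final[OF _ \<open>xi m \<alpha> H ` monomials m = UNIV\<close>] show ?thesis
    by blast
qed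

end
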